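(* Let $N=N_T+N_I+N_R$ and let $\mathbf{Z}\in\mathbb{C}^{N\times N}$ be invertible, partitioned into blocks indexed by $T,I,R$ of sizes $N_T,N_I,N_R$. Let $\mathbf{Z}_T\in\mathbb{C}^{N_T\times N_T}$ and $\mathbf{Z}_R\in\mathbb{C}^{N_R\times N_R}$ be invertible diagonal matrices and $\mathbf{Z}_I\in\mathbb{C}^{N_I\times N_I}$ invertible, and set $\mathbf{Z}_0=\mathrm{blkdiag}(\mathbf{Z}_T,\mathbf{Z}_I,\mathbf{Z}_R)$. Let $\mathbf{Y}=\mathbf{Z}^{-1}$ (partitioned in the same way into blocks $\mathbf{Y}_{ab}$), $\mathbf{Y}_T=\mathbf{Z}_T^{-1}$, $\mathbf{Y}_I=\mathbf{Z}_I^{-1}$, $\mathbf{Y}_R=\mathbf{Z}_R^{-1}$. Assume $\mathbf{I}+\mathbf{Z}_0\mathbf{Z}^{-1}$ is invertible and that the matrices $\mathbf{Y}_R+\mathbf{Y}_{RR}$ and $\begin{bmatrix}\mathbf{Y}_I+\mathbf{Y}_{II}&\mathbf{Y}_{IR}\\ \mathbf{Y}_{RI}&\mathbf{Y}_R+\mathbf{Y}_{RR}\end{bmatrix}$ are invertible. Let $\widetilde{\mathbf{Z}}=(\mathbf{I}+\mathbf{Z}_0\mathbf{Z}^{-1})^{-1}$ with blocks $\widetilde{\mathbf{Z}}_{ab}$. Then $\widetilde{\mathbf{Z}}_{TT}$ is invertible and $$\widetilde{\mathbf{Z}}_{RT}\widetilde{\mathbf{Z}}_{TT}^{-1}=\left(\mathbf{Y}_R+\mathbf{Y}_{RR}\right)^{-1}\Big(-\mathbf{Y}_{RT}+\mathbf{Y}_{RI}\big(\mathbf{Y}_I+\mathbf{Y}_{II}-\mathbf{Y}_{IR}(\mathbf{Y}_R+\mathbf{Y}_{RR})^{-1}\mathbf{Y}_{RI}\big)^{-1}\big(\mathbf{Y}_{IT}-\mathbf{Y}_{IR}(\mathbf{Y}_R+\mathbf{Y}_{RR})^{-1}\mathbf{Y}_{RT}\big)\Big),$$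 where the inner inverse exists.
   Context: Blocks are indexed by $T$ (first $N_T$ indices), $I$ (next $N_I$), $R$ (last $N_R$); $\mathbf{X}_{ab}$ denotes the $(a,b)$ block of a matrix $\mathbf{X}$. $\widetilde{\mathbf{Z}}_{RT}\widetilde{\mathbf{Z}}_{TT}^{-1}$ is the general physics-consistent RIS-aided MIMO channel matrix (mapping transmit to receive voltages) in multiport network theory. *)

theory Defs
  imports Complex_Main "Jordan_Normal_Form.Matrix"
begin

text \<open>Inverse of a square matrix (meaningful when the matrix is invertible).\<close>
definition minv :: "'a :: semiring_1 mat \<Rightarrow> 'a mat" where
  "minv A = (SOME B. B \<in> carrier_mat (dim_row A) (dim_row A) \<and> inverts_mat A B \<and> inverts_mat B A)"

definition blk :: "'a mat \<Rightarrow> nat \<Rightarrow> nat \<Rightarrow> nat \<Rightarrow> nat \<Rightarrow> 'a mat" where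
  "blk A r0 nr c0 nc = mat nr nc (\<lambda>(i, j). A $$ (i + r0, j + c0))"

end

(*
  With Y0 = blkdiag(YT, YI, YR) = Z0^-1 one has I + Z0 Y = Z0 (Y0 + Y), hence Zt = W Y0 with
  W = (Y0 + Y)^-1.  As Y0 is block diagonal, the T-block column of Zt is that of W times YT, and
  YT cancels in ZtRT ZtTT^-1 = WRT WTT^-1.  In the T-block column, the I- and R-block rows of
  (Y0 + Y) W = I form a linear system for WIT and WRT whose right-hand side is a multiple of
  WTT: eliminating WRT with YR + YRR and then solving for WIT with the Schur complement
  YI + YII - YIR (YR + YRR)^-1 YRI gives WRT = Phi WTT, Phi being the claimed right-hand side,
  and the T-block row then exhibits a left inverse of WTT.  The Schur complement is invertible
  since det [P B; C D] = det (P - B D^-1 C) det D.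
*)

theory Submission
  imports Defs "Jordan_Normal_Form.Determinant"
begin

section \<open>Inverses\<close>

lemma minv_mat:
  fixes A :: "'a::semiring_1 mat"
  assumes A: "A \<in> carrier_mat n n" and "invertible_mat A"
  shows minv_carrier_mat: "minv A \<in> carrier_mat n n"
    and minv_right_inverse: "A * minv A = 1\<^sub>m n"
    and minv_left_inverse: "minv A * A = 1\<^sub>m n"
proof -
  from \<open>invertible_mat A\<close> obtain B where AB: "A * B = 1\<^sub>m n" and BA: "B * A = 1\<^sub>m (dim_row B)"
    using A unfolding invertible_mat_def inverts_mat_def by auto
  have "dim_col B = n" using arg_cong[OF AB, of dim_col] A by simp
  moreover have "dim_row B = n" using arg_cong[OF BA, of dim_col] A by simp
  ultimately have "B \<in> carrier_mat n n" by auto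
  with AB BA A have "\<exists>B. B \<in> carrier_mat (dim_row A) (dim_row A) \<and> inverts_mat A B \<and> inverts_mat B A"
    unfolding inverts_mat_def by auto
  from someI_ex[OF this] A
  show "minv A \<in> carrier_mat n n" "A * minv A = 1\<^sub>m n" "minv A * A = 1\<^sub>m n"
    unfolding minv_def inverts_mat_def by auto
qed

lemma left_inverse_mat:
  fixes A :: "'a::field mat"
  assumes A: "A \<in> carrier_mat n n" and L: "L \<in> carrier_mat n n" and LA: "L * A = 1\<^sub>m n"
  shows invertible_mat_left_inverseI: "invertible_mat A"
    and minv_left_inverse_eq: "minv A = L"
proof -
  have AL: "A * L = 1\<^sub>m n" using mat_mult_left_right_inverse[OF L A LA] .
  show inv: "invertible_mat A" unfolding invertible_mat_def inverts_mat_def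
    using A L AL LA by (auto intro!: exI[of _ L])
  have "minv A = (minv A * A) * L"
    using A L AL minv_carrier_mat[OF A inv] by (simp add: assoc_mult_mat[of _ n n _ n _ n])
  then show "minv A = L" using L minv_left_inverse[OF A inv] by simp
qed

(* Forms of the ring laws whose side conditions are dimension equations only, so that simp
   can discharge them from carrier facts. *)

lemma assoc_mult_mat':
  fixes A :: "'a::semiring_0 mat"
  shows "dim_col A = dim_row B \<Longrightarrow> dim_col B = dim_row C \<Longrightarrow> A * B * C = A * (B * C)"
  by (rule assoc_mult_mat[of A "dim_row A" "dim_col A" B "dim_col B" C "dim_col C"]) auto

lemma mult_add_distrib_mat':
  fixes A :: "'a::semiring_0 mat"
  shows "dim_col A = dim_row B \<Longrightarrow> dim_row C = dim_row B \<Longrightarrow> dim_col C = dim_col B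
    \<Longrightarrow> A * (B + C) = A * B + A * C"
  by (rule mult_add_distrib_mat[of A "dim_row A" "dim_col A" B "dim_col B"]) auto

lemma add_mult_distrib_mat':
  fixes A :: "'a::semiring_0 mat"
  shows "dim_row B = dim_row A \<Longrightarrow> dim_col B = dim_col A \<Longrightarrow> dim_col A = dim_row C
    \<Longrightarrow> (A + B) * C = A * C + B * C"
  by (rule add_mult_distrib_mat[of A "dim_row A" "dim_col A" B C "dim_col C"]) auto

lemma mult_minus_distrib_mat':
  fixes A :: "'a::ring mat"
  shows "dim_col A = dim_row B \<Longrightarrow> dim_row C = dim_row B \<Longrightarrow> dim_col C = dim_col B
    \<Longrightarrow> A * (B - C) = A * B - A * C"
  by (rule mult_minus_distrib_mat[of A "dim_row A" "dim_col A" B "dim_col B"]) auto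

lemma minus_mult_distrib_mat':
  fixes A :: "'a::ring mat"
  shows "dim_row B = dim_row A \<Longrightarrow> dim_col B = dim_col A \<Longrightarrow> dim_col A = dim_row C
    \<Longrightarrow> (A - B) * C = A * C - B * C"
  by (rule minus_mult_distrib_mat[of A "dim_row A" "dim_col A" B C "dim_col C"]) auto

lemmas mat_mult_dims_simps = assoc_mult_mat' mult_add_distrib_mat' add_mult_distrib_mat'
  mult_minus_distrib_mat' minus_mult_distrib_mat'

lemma add_eq_zero_mat_imp_eq_uminus:
  fixes X :: "'a::ab_group_add mat"
  assumes "X \<in> carrier_mat n m" "Y \<in> carrier_mat n m" "X + Y = 0\<^sub>m n m"
  shows "Y = - X"
proof (rule eq_matI)
  fix i j assume "i < dim_row (- X)" "j < dim_col (- X)"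
  then have "(X + Y) $$ (i, j) = 0" using assms by simp
  then have "X $$ (i, j) + Y $$ (i, j) = 0"
    using assms(1,2) \<open>i < dim_row (- X)\<close> \<open>j < dim_col (- X)\<close> by simp
  then show "Y $$ (i, j) = (- X) $$ (i, j)"
    using \<open>i < dim_row (- X)\<close> \<open>j < dim_col (- X)\<close> by (simp add: eq_neg_iff_add_eq_0 add.commute)
qed (use assms in auto)

lemma invertible_mat_minv:
  fixes A :: "'a::field mat"
  assumes "A \<in> carrier_mat n n" and "invertible_mat A"
  shows "invertible_mat (minv A)"
  using invertible_mat_left_inverseI[OF minv_carrier_mat[OF assms] assms(1)]
    minv_right_inverse[OF assms] .

lemma invertible_mult_mat:
  fixes A :: "'a::field mat"
  assumes A: "A \<in> carrier_mat n n" and B: "B \<in> carrier_mat n n"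
    and "invertible_mat A" and "invertible_mat B"
  shows invertible_mat_mult: "invertible_mat (A * B)"
    and minv_mult_mat: "minv (A * B) = minv B * minv A"
proof -
  note Ai = minv_mat[OF A \<open>invertible_mat A\<close>] and Bi = minv_mat[OF B \<open>invertible_mat B\<close>]
  have "minv B * minv A * (A * B) = minv B * ((minv A * A) * B)"
    using A B Ai(1) Bi(1) by (simp add: assoc_mult_mat')
  also have "\<dots> = 1\<^sub>m n" using B Ai(3) Bi(3) by simp
  finally have "minv B * minv A * (A * B) = 1\<^sub>m n" .
  with A B Ai(1) Bi(1) show "invertible_mat (A * B)" "minv (A * B) = minv B * minv A"
    using left_inverse_mat[of "A * B" n "minv B * minv A"] by auto
qed

lemma minv_one_plus_mult:
  fixes Z Y :: "'a::field mat"
  assumes Z: "Z \<in> carrier_mat n n" and "invertible_mat Z" and Y: "Y \<in> carrier_mat n n"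
    and "invertible_mat (1\<^sub>m n + Z * Y)"
  shows "invertible_mat (minv Z + Y)"
    and "minv (1\<^sub>m n + Z * Y) = minv (minv Z + Y) * minv Z"
proof -
  note Zi = minv_mat[OF Z \<open>invertible_mat Z\<close>]
  have factor: "1\<^sub>m n + Z * Y = Z * (minv Z + Y)"
    using Z Y Zi by (simp add: mult_add_distrib_mat[of Z n n])
  have "minv Z * (1\<^sub>m n + Z * Y) = minv Z * 1\<^sub>m n + minv Z * (Z * Y)"
    using Z Y by (intro mult_add_distrib_mat[OF Zi(1)]) auto
  also have "\<dots> = minv Z + (minv Z * Z) * Y"
    using Z Y Zi(1) by (simp add: assoc_mult_mat[of _ n n _ n _ n])
  finally have "minv Z + Y = minv Z * (1\<^sub>m n + Z * Y)"
    using Y Zi(3) by simp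
  then show inv: "invertible_mat (minv Z + Y)"
    using invertible_mat_mult[OF Zi(1) _ invertible_mat_minv[OF Z] assms(4)] Z Y assms(2) by auto
  show "minv (1\<^sub>m n + Z * Y) = minv (minv Z + Y) * minv Z"
    unfolding factor using Z Y Zi inv assms by (intro minv_mult_mat) auto
qed

lemma invertible_mat_iff_det:
  fixes A :: "'a::field mat"
  assumes A: "A \<in> carrier_mat n n"
  shows "invertible_mat A \<longleftrightarrow> det A \<noteq> 0"
proof
  assume "invertible_mat A"
  then have "det A * det (minv A) = 1"
    using det_mult[OF A minv_carrier_mat] minv_right_inverse A by (metis det_one)
  then show "det A \<noteq> 0" by auto
next
  assume "det A \<noteq> 0"
  from det_non_zero_imp_unit[OF A this, of undefined]
  obtain B where "B \<in> carrier_mat n n" "B * A = 1\<^sub>m n"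
    unfolding Units_def ring_mat_def by auto
  then show "invertible_mat A" by (intro invertible_mat_left_inverseI[OF A])
qed

section \<open>Schur complements\<close>

lemma det_four_block_mat_schur:
  fixes P :: "'a::field mat"
  assumes P: "P \<in> carrier_mat n n" and B: "B \<in> carrier_mat n m"
    and C: "C \<in> carrier_mat m n" and D: "D \<in> carrier_mat m m" and "invertible_mat D"
  shows "det (four_block_mat P B C D) = det (P - B * minv D * C) * det D"
proof -
  let ?S = "P - B * minv D * C"
  have Di: "minv D \<in> carrier_mat m m" using minv_carrier_mat[OF D \<open>invertible_mat D\<close>] .
  have "four_block_mat P B C D
      = four_block_mat (1\<^sub>m n) (B * minv D) (0\<^sub>m m n) (1\<^sub>m m) * four_block_mat ?S (0\<^sub>m n m) C D"
  proof -
    have "?S + B * minv D * C = P" using P B C Di by (intro eq_matI) auto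
    moreover have "B * minv D * D = B"
      using B Di D minv_left_inverse[OF D \<open>invertible_mat D\<close>]
      by (simp add: assoc_mult_mat[of _ n m _ m _ m])
    ultimately show ?thesis
      using P B C D Di by (subst mult_four_block_mat[of _ n n _ m _ m _ _ n _ m]) auto
  qed
  also have "det \<dots> = det (four_block_mat (1\<^sub>m n) (B * minv D) (0\<^sub>m m n) (1\<^sub>m m))
      * det (four_block_mat ?S (0\<^sub>m n m) C D)"
    using P B C D Di by (intro det_mult[of _ "n + m"]) auto
  also have "det (four_block_mat (1\<^sub>m n) (B * minv D) (0\<^sub>m m n) (1\<^sub>m m)) = 1"
    using B Di by (subst det_four_block_mat_lower_left_zero[of _ n _ m]) auto
  also have "det (four_block_mat ?S (0\<^sub>m n m) C D) = det ?S * det D"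
    using P B C D Di by (intro det_four_block_mat_upper_right_zero) auto
  finally show ?thesis by simp
qed

lemma invertible_schur_complement:
  fixes P :: "'a::field mat"
  assumes P: "P \<in> carrier_mat n n" and B: "B \<in> carrier_mat n m"
    and C: "C \<in> carrier_mat m n" and D: "D \<in> carrier_mat m m"
    and "invertible_mat D" and "invertible_mat (four_block_mat P B C D)"
  shows "invertible_mat (P - B * minv D * C)"
proof -
  have "det (four_block_mat P B C D) \<noteq> 0"
    using assms invertible_mat_iff_det[of "four_block_mat P B C D" "n + m"] by auto
  then have "det (P - B * minv D * C) \<noteq> 0"
    using det_four_block_mat_schur[OF assms(1-5)] by auto
  moreover have "P - B * minv D * C \<in> carrier_mat n n"
    using P B C minv_carrier_mat[OF D \<open>invertible_mat D\<close>] by auto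
  ultimately show ?thesis using invertible_mat_iff_det by blast
qed

lemma block_elimination:
  fixes X U V A1 P B A2 C D :: "'a::field mat"
  assumes X: "X \<in> carrier_mat t k" and U: "U \<in> carrier_mat m k" and V: "V \<in> carrier_mat n k"
    and A1: "A1 \<in> carrier_mat m t" and P: "P \<in> carrier_mat m m" and B: "B \<in> carrier_mat m n"
    and A2: "A2 \<in> carrier_mat n t" and C: "C \<in> carrier_mat n m" and D: "D \<in> carrier_mat n n"
    and "invertible_mat D" and "invertible_mat (P - B * minv D * C)"
    and eq1: "A1 * X + P * U + B * V = 0\<^sub>m m k"
    and eq2: "A2 * X + C * U + D * V = 0\<^sub>m n k"
  defines "S \<equiv> P - B * minv D * C" and "G \<equiv> A1 - B * minv D * A2"
  shows "U = - (minv S * G) * X"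
    and "V = minv D * (- A2 + C * minv S * G) * X"
proof -
  note Di = minv_mat[OF D \<open>invertible_mat D\<close>]
  have Sc: "S \<in> carrier_mat m m" and Gc: "G \<in> carrier_mat m t"
    unfolding S_def G_def using P B C A1 A2 Di by auto
  note Si = minv_mat[OF Sc \<open>invertible_mat (P - B * minv D * C)\<close>[folded S_def]]
  note dims = X U V A1 P B A2 C D Sc Gc Di(1) Si(1)
  have "D * V = - (A2 * X + C * U)"
    using eq2 dims by (intro add_eq_zero_mat_imp_eq_uminus) auto
  moreover have "V = minv D * (D * V)"
    using dims Di(3) by (simp add: assoc_mult_mat'[symmetric])
  ultimately have V_eq: "V = - (minv D * (A2 * X + C * U))" using dims by simp
  have SU: "S * U = P * U - B * (minv D * (C * U))"
    and GX: "G * X = A1 * X - B * (minv D * (A2 * X))"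
    and BV: "B * V = - (B * (minv D * (A2 * X))) - B * (minv D * (C * U))"
    unfolding S_def G_def V_eq using dims by (auto simp: mat_mult_dims_simps intro!: eq_matI)
  have "S * U + G * X = 0\<^sub>m m k"
    \<comment> \<open>an additive identity, checked entrywise with the products as atoms\<close>
  proof (rule eq_matI)
    fix i j assume ij: "i < dim_row (0\<^sub>m m k :: 'a mat)" "j < dim_col (0\<^sub>m m k :: 'a mat)"
    have "(A1 * X + P * U + B * V) $$ (i, j) = 0" using eq1 ij by simp
    then show "(S * U + G * X) $$ (i, j) = 0\<^sub>m m k $$ (i, j)"
      unfolding SU GX BV using ij dims by (simp add: algebra_simps)
  qed (use dims in auto)
  then have "S * U = - (G * X)"
    using dims by (intro add_eq_zero_mat_imp_eq_uminus) (auto simp: comm_add_mat[of _ m k])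
  moreover have "U = minv S * (S * U)"
    using dims Si(3) by (simp add: assoc_mult_mat'[symmetric])
  ultimately show U_eq: "U = - (minv S * G) * X"
    using dims by (simp add: assoc_mult_mat')
  show "V = minv D * (- A2 + C * minv S * G) * X"
    unfolding V_eq U_eq using dims by (auto simp: mat_mult_dims_simps intro!: eq_matI)
qed

section \<open>Blocks\<close>

lemma blk_carrier_mat [simp]: "blk A r nr c nc \<in> carrier_mat nr nc"
  and dim_blk [simp]: "dim_row (blk A r nr c nc) = nr" "dim_col (blk A r nr c nc) = nc"
  and index_blk [simp]: "i < nr \<Longrightarrow> j < nc \<Longrightarrow> blk A r nr c nc $$ (i, j) = A $$ (i + r, j + c)"
  unfolding blk_def by auto

lemma blk_add_mat:
  assumes "A \<in> carrier_mat n m" "B \<in> carrier_mat n m" "r + nr \<le> n" "c + nc \<le> m"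
  shows "blk (A + B) r nr c nc = blk A r nr c nc + blk B r nr c nc"
  using assms by (intro eq_matI) auto

lemma blk_one_mat_diag: "r + k \<le> n \<Longrightarrow> blk (1\<^sub>m n) r k r k = 1\<^sub>m k"
  by auto

lemma blk_one_mat_off_diag:
  assumes "r + nr \<le> c \<or> c + nc \<le> r" and "r + nr \<le> n" and "c + nc \<le> n"
  shows "blk (1\<^sub>m n) r nr c nc = 0\<^sub>m nr nc"
  using assms by auto

lemma sum_lessThan_add:
  fixes f :: "nat \<Rightarrow> 'a::comm_monoid_add"
  shows "(\<Sum>k<a + b. f k) = (\<Sum>k<a. f k) + (\<Sum>k<b. f (k + a))"
  by (induct b) (simp_all add: ac_simps)

lemma blk_mult_mat3:
  assumes "A \<in> carrier_mat n (a + b + c)" and "B \<in> carrier_mat (a + b + c) p"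
    and "r + nr \<le> n" "s + ns \<le> p"
  shows "blk (A * B) r nr s ns = blk A r nr 0 a * blk B 0 a s ns + blk A r nr a b * blk B a b s ns
    + blk A r nr (a + b) c * blk B (a + b) c s ns"
proof (rule eq_matI)
  fix i j assume "i < dim_row (blk A r nr 0 a * blk B 0 a s ns + blk A r nr a b * blk B a b s ns
    + blk A r nr (a + b) c * blk B (a + b) c s ns)"
    and "j < dim_col (blk A r nr 0 a * blk B 0 a s ns + blk A r nr a b * blk B a b s ns
    + blk A r nr (a + b) c * blk B (a + b) c s ns)"
  then have i: "i < nr" and j: "j < ns" by auto
  let ?f = "\<lambda>k. A $$ (i + r, k) * B $$ (k, j + s)"
  have "blk (A * B) r nr s ns $$ (i, j) = (\<Sum>k<a + b + c. ?f k)"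
    using assms i j by (auto simp: scalar_prod_def lessThan_atLeast0 intro!: sum.cong)
  also have "\<dots> = (\<Sum>k<a. ?f k) + (\<Sum>k<b. ?f (k + a)) + (\<Sum>k<c. ?f (k + (a + b)))"
    by (simp add: sum_lessThan_add)
  finally show "blk (A * B) r nr s ns $$ (i, j) = (blk A r nr 0 a * blk B 0 a s ns
    + blk A r nr a b * blk B a b s ns + blk A r nr (a + b) c * blk B (a + b) c s ns) $$ (i, j)"
    using i j by (simp add: scalar_prod_def lessThan_atLeast0)
qed auto

lemma mult_eq_one_mat_first_block_column:
  assumes M: "M \<in> carrier_mat (a + b + c) (a + b + c)" and W: "W \<in> carrier_mat (a + b + c) (a + b + c)"
    and MW: "M * W = 1\<^sub>m (a + b + c)"
  shows "blk M 0 a 0 a * blk W 0 a 0 a + blk M 0 a a b * blk W a b 0 a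
      + blk M 0 a (a + b) c * blk W (a + b) c 0 a = 1\<^sub>m a"
    and "blk M a b 0 a * blk W 0 a 0 a + blk M a b a b * blk W a b 0 a
      + blk M a b (a + b) c * blk W (a + b) c 0 a = 0\<^sub>m b a"
    and "blk M (a + b) c 0 a * blk W 0 a 0 a + blk M (a + b) c a b * blk W a b 0 a
      + blk M (a + b) c (a + b) c * blk W (a + b) c 0 a = 0\<^sub>m c a"
  using blk_mult_mat3[OF M W, of 0 a 0 a] blk_mult_mat3[OF M W, of a b 0 a]
    blk_mult_mat3[OF M W, of "a + b" c 0 a]
  unfolding MW by (simp_all add: blk_one_mat_diag blk_one_mat_off_diag)

lemma blk_minv_column_ratio:
  fixes M :: "'a::field mat"
  assumes M: "M \<in> carrier_mat (a + b + c) (a + b + c)" and "invertible_mat M"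
  defines "W \<equiv> minv M"
    and "MIT \<equiv> blk M a b 0 a" and "MII \<equiv> blk M a b a b" and "MIR \<equiv> blk M a b (a + b) c"
    and "MRT \<equiv> blk M (a + b) c 0 a" and "MRI \<equiv> blk M (a + b) c a b"
    and "MRR \<equiv> blk M (a + b) c (a + b) c"
  assumes "invertible_mat MRR" and "invertible_mat (MII - MIR * minv MRR * MRI)"
  shows "invertible_mat (blk W 0 a 0 a)"
    and "blk W (a + b) c 0 a * minv (blk W 0 a 0 a)
      = minv MRR * (- MRT + MRI * minv (MII - MIR * minv MRR * MRI) * (MIT - MIR * minv MRR * MRT))"
proof -
  let ?n = "a + b + c"
  define WTT WIT WRT
    where "WTT = blk W 0 a 0 a" and "WIT = blk W a b 0 a" and "WRT = blk W (a + b) c 0 a"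
  define K Phi where "K = - (minv (MII - MIR * minv MRR * MRI) * (MIT - MIR * minv MRR * MRT))"
    and "Phi = minv MRR
      * (- MRT + MRI * minv (MII - MIR * minv MRR * MRI) * (MIT - MIR * minv MRR * MRT))"
  have "W \<in> carrier_mat ?n ?n" and "M * W = 1\<^sub>m ?n"
    unfolding W_def using minv_mat[OF M \<open>invertible_mat M\<close>] by auto
  note E = mult_eq_one_mat_first_block_column[OF M this, folded WTT_def WIT_def WRT_def
      MIT_def MII_def MIR_def MRT_def MRI_def MRR_def]
  have carriers: "WTT \<in> carrier_mat a a" "WIT \<in> carrier_mat b a" "WRT \<in> carrier_mat c a"
    "MIT \<in> carrier_mat b a" "MII \<in> carrier_mat b b" "MIR \<in> carrier_mat b c"
    "MRT \<in> carrier_mat c a" "MRI \<in> carrier_mat c b" "MRR \<in> carrier_mat c c"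
    by (simp_all add: WTT_def WIT_def WRT_def MIT_def MII_def MIR_def MRT_def MRI_def MRR_def)
  have WIT: "WIT = K * WTT" and WRT: "WRT = Phi * WTT"
    using block_elimination[OF carriers assms(10,11) E(2,3)] unfolding K_def Phi_def .
  have Di: "minv MRR \<in> carrier_mat c c" using minv_carrier_mat[OF carriers(9) assms(10)] .
  have "minv (MII - MIR * minv MRR * MRI) \<in> carrier_mat b b"
    by (rule minv_carrier_mat[OF _ assms(11)]) (use carriers Di in auto)
  then have Kc: "K \<in> carrier_mat b a" and Phic: "Phi \<in> carrier_mat c a"
    unfolding K_def Phi_def using carriers Di by auto
  define L where "L = blk M 0 a 0 a + blk M 0 a a b * K + blk M 0 a (a + b) c * Phi"
  have Lc: "L \<in> carrier_mat a a" unfolding L_def using Kc Phic by auto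
  have LW: "L * WTT = 1\<^sub>m a"
    using E(1) Kc Phic carriers unfolding L_def WIT WRT
    by (simp add: mat_mult_dims_simps carrier_matD)
  have "invertible_mat WTT" and minv_WTT: "minv WTT = L"
    using left_inverse_mat[OF carriers(1) Lc LW] by auto
  then show "invertible_mat (blk W 0 a 0 a)" unfolding WTT_def by simp
  have "WRT * minv WTT = Phi * (WTT * L)"
    unfolding WRT minv_WTT using Phic carriers(1) Lc by (simp add: assoc_mult_mat')
  also have "\<dots> = Phi"
    using mat_mult_left_right_inverse[OF Lc carriers(1) LW] Phic by simp
  finally show "blk W (a + b) c 0 a * minv (blk W 0 a 0 a) = Phi"
    unfolding WTT_def WRT_def .
qed

section \<open>Block-diagonal matrices\<close>

lemma diag_block_mat_mult:
  assumes "list_all2 (\<lambda>A B. dim_col A = dim_row B) As Bs"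
  shows "diag_block_mat As * diag_block_mat Bs = diag_block_mat (map2 (*) As Bs)"
  using assms
proof (induction rule: list_all2_induct)
  case (Cons A As B Bs)
  let ?DA = "diag_block_mat As" and ?DB = "diag_block_mat Bs"
  have "dim_col ?DA = dim_row ?DB"
    using Cons(2) unfolding dim_diag_block_mat by (induction rule: list_all2_induct) auto
  then have "diag_block_mat (A # As) * diag_block_mat (B # Bs)
      = four_block_mat (A * B) (0\<^sub>m (dim_row A) (dim_col ?DB)) (0\<^sub>m (dim_row ?DA) (dim_col B)) (?DA * ?DB)"
    unfolding diag_block_mat.simps Let_def using Cons(1)
    by (subst mult_four_block_mat[where ?nr1.0 = "dim_row A" and ?n1.0 = "dim_col A"
         and ?nr2.0 = "dim_row ?DA" and ?n2.0 = "dim_col ?DA"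
         and ?nc1.0 = "dim_col B" and ?nc2.0 = "dim_col ?DB"]) auto
  then show ?case by (simp add: Let_def flip: Cons(3))
qed simp

lemma minv_diag_block_mat:
  fixes As :: "'a::field mat list"
  assumes inv: "\<forall>A\<in>set As. invertible_mat A"
  shows "invertible_mat (diag_block_mat As)"
    and "minv (diag_block_mat As) = diag_block_mat (map minv As)"
proof -
  let ?n = "sum_list (map dim_row As)"
  have sq: "A \<in> carrier_mat (dim_row A) (dim_row A)" if "A \<in> set As" for A
    using inv that unfolding invertible_mat_def square_mat.simps carrier_mat_def by auto
  then have sq_minv: "minv A \<in> carrier_mat (dim_row A) (dim_row A)" if "A \<in> set As" for A
    using inv minv_carrier_mat that by blast
  have dims: "map dim_col As = map dim_row As" "map dim_col (map minv As) = map dim_row As"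
    "map dim_row (map minv As) = map dim_row As"
    unfolding map_map by (rule map_cong; auto dest: sq sq_minv)+
  have carrier: "diag_block_mat As \<in> carrier_mat ?n ?n"
    and carrier_minv: "diag_block_mat (map minv As) \<in> carrier_mat ?n ?n"
    by (intro carrier_matI; simp only: dim_diag_block_mat dims)+
  have "list_all2 (\<lambda>A B. dim_col A = dim_row B) (map minv As) As"
    unfolding list_all2_map1 list_all2_same by (auto dest: sq_minv)
  then have "diag_block_mat (map minv As) * diag_block_mat As
      = diag_block_mat (map2 (*) (map minv As) As)"
    by (rule diag_block_mat_mult)
  also have "map2 (*) (map minv As) As = map (\<lambda>A. 1\<^sub>m (dim_row A)) As"
    using sq inv minv_left_inverse by (auto simp: zip_map1 zip_same_conv_map)
  finally have "diag_block_mat (map minv As) * diag_block_mat As = 1\<^sub>m ?n"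
    by simp
  from left_inverse_mat[OF carrier carrier_minv this]
  show "invertible_mat (diag_block_mat As)" "minv (diag_block_mat As) = diag_block_mat (map minv As)"
    by auto
qed

lemma diag_block_mat3_carrier:
  "A \<in> carrier_mat a a \<Longrightarrow> B \<in> carrier_mat b b \<Longrightarrow> C \<in> carrier_mat c c
    \<Longrightarrow> diag_block_mat [A, B, C] \<in> carrier_mat (a + b + c) (a + b + c)"
  by (auto simp: Let_def)

lemma blk_diag_block_mat3:
  assumes "A \<in> carrier_mat a a" "B \<in> carrier_mat b b" "C \<in> carrier_mat c c"
  shows "blk (diag_block_mat [A, B, C]) 0 a 0 a = A"
    and "blk (diag_block_mat [A, B, C]) 0 a a b = 0\<^sub>m a b"
    and "blk (diag_block_mat [A, B, C]) 0 a (a + b) c = 0\<^sub>m a c"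
    and "blk (diag_block_mat [A, B, C]) a b 0 a = 0\<^sub>m b a"
    and "blk (diag_block_mat [A, B, C]) a b a b = B"
    and "blk (diag_block_mat [A, B, C]) a b (a + b) c = 0\<^sub>m b c"
    and "blk (diag_block_mat [A, B, C]) (a + b) c 0 a = 0\<^sub>m c a"
    and "blk (diag_block_mat [A, B, C]) (a + b) c a b = 0\<^sub>m c b"
    and "blk (diag_block_mat [A, B, C]) (a + b) c (a + b) c = C"
  using assms by (auto simp: Let_def)

lemma blk_diag_block_mat3_add:
  fixes Y :: "'a::monoid_add mat"
  assumes A: "A \<in> carrier_mat a a" and B: "B \<in> carrier_mat b b" and C: "C \<in> carrier_mat c c"
    and Y: "Y \<in> carrier_mat (a + b + c) (a + b + c)"
  defines "D \<equiv> diag_block_mat [A, B, C] + Y"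
  shows "blk D 0 a 0 a = A + blk Y 0 a 0 a"
    and "blk D 0 a a b = blk Y 0 a a b"
    and "blk D 0 a (a + b) c = blk Y 0 a (a + b) c"
    and "blk D a b 0 a = blk Y a b 0 a"
    and "blk D a b a b = B + blk Y a b a b"
    and "blk D a b (a + b) c = blk Y a b (a + b) c"
    and "blk D (a + b) c 0 a = blk Y (a + b) c 0 a"
    and "blk D (a + b) c a b = blk Y (a + b) c a b"
    and "blk D (a + b) c (a + b) c = C + blk Y (a + b) c (a + b) c"
  unfolding D_def using blk_add_mat[OF diag_block_mat3_carrier[OF A B C] Y] blk_diag_block_mat3[OF A B C]
  by (simp_all del: diag_block_mat.simps)

lemma blk_mult_diag_block_mat3:
  assumes W: "W \<in> carrier_mat n (a + b + c)" and "r + nr \<le> n"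
    and A: "A \<in> carrier_mat a a" and B: "B \<in> carrier_mat b b" and C: "C \<in> carrier_mat c c"
  shows "blk (W * diag_block_mat [A, B, C]) r nr 0 a = blk W r nr 0 a * A"
  using blk_mult_mat3[OF W diag_block_mat3_carrier[OF A B C] \<open>r + nr \<le> n\<close>, of 0 a]
    blk_diag_block_mat3[OF A B C] right_add_zero_mat[OF mult_carrier_mat[OF blk_carrier_mat A]]
  by (simp del: diag_block_mat.simps)

lemma blk_ratio_mult_diag_block_mat3:
  fixes W :: "'a::field mat"
  assumes W: "W \<in> carrier_mat n (a + b + c)" and "a \<le> n" and "r + nr \<le> n"
    and A: "A \<in> carrier_mat a a" and "invertible_mat A"
    and B: "B \<in> carrier_mat b b" and C: "C \<in> carrier_mat c c"
    and "invertible_mat (blk W 0 a 0 a)"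
  defines "WD \<equiv> W * diag_block_mat [A, B, C]"
  shows "invertible_mat (blk WD 0 a 0 a)"
    and "blk WD r nr 0 a * minv (blk WD 0 a 0 a) = blk W r nr 0 a * minv (blk W 0 a 0 a)"
proof -
  have TT: "blk WD 0 a 0 a = blk W 0 a 0 a * A" and RT: "blk WD r nr 0 a = blk W r nr 0 a * A"
    unfolding WD_def using blk_mult_diag_block_mat3[OF W _ A B C] assms(2,3) by auto
  note Ai = minv_mat[OF A \<open>invertible_mat A\<close>]
    and Wi = minv_mat[OF blk_carrier_mat \<open>invertible_mat (blk W 0 a 0 a)\<close>]
  show "invertible_mat (blk WD 0 a 0 a)"
    unfolding TT using A assms by (intro invertible_mat_mult) auto
  have "minv (blk WD 0 a 0 a) = minv A * minv (blk W 0 a 0 a)"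
    unfolding TT using A assms by (intro minv_mult_mat) auto
  then have "blk WD r nr 0 a * minv (blk WD 0 a 0 a)
      = blk W r nr 0 a * ((A * minv A) * minv (blk W 0 a 0 a))"
    unfolding RT using A Ai(1) Wi(1) by (simp add: assoc_mult_mat')
  then show "blk WD r nr 0 a * minv (blk WD 0 a 0 a) = blk W r nr 0 a * minv (blk W 0 a 0 a)"
    using Ai(2) Wi(1) by simp
qed

theorem mainTheorem4:
  fixes NT NI NR :: nat
    and Z ZT ZI ZR :: "complex mat"
  defines "N \<equiv> NT + NI + NR"
  defines "Z0 \<equiv> diag_block_mat [ZT, ZI, ZR]"
  defines "Y \<equiv> minv Z"
  defines "YT \<equiv> minv ZT"
  defines "YI \<equiv> minv ZI"
  defines "YR \<equiv> minv ZR"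
  defines "YTT \<equiv> blk Y 0 NT 0 NT" and "YTI \<equiv> blk Y 0 NT NT NI" and "YTR \<equiv> blk Y 0 NT (NT + NI) NR"
  defines "YIT \<equiv> blk Y NT NI 0 NT" and "YII \<equiv> blk Y NT NI NT NI" and "YIR \<equiv> blk Y NT NI (NT + NI) NR"
  defines "YRT \<equiv> blk Y (NT + NI) NR 0 NT" and "YRI \<equiv> blk Y (NT + NI) NR NT NI"
    and "YRR \<equiv> blk Y (NT + NI) NR (NT + NI) NR"
  defines "Zt \<equiv> minv (1\<^sub>m N + Z0 * minv Z)"
  defines "ZtTT \<equiv> blk Zt 0 NT 0 NT" and "ZtRT \<equiv> blk Zt (NT + NI) NR 0 NT"
  assumes Z: "Z \<in> carrier_mat N N" and Zinv: "invertible_mat Z"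
    and ZT: "ZT \<in> carrier_mat NT NT" and ZTdiag: "diagonal_mat ZT" and ZTinv: "invertible_mat ZT"
    and ZI: "ZI \<in> carrier_mat NI NI" and ZIinv: "invertible_mat ZI"
    and ZR: "ZR \<in> carrier_mat NR NR" and ZRdiag: "diagonal_mat ZR" and ZRinv: "invertible_mat ZR"
    and Ainv: "invertible_mat (1\<^sub>m N + Z0 * minv Z)"
    and Binv: "invertible_mat (YR + YRR)"
    and Cinv: "invertible_mat (four_block_mat (YI + YII) YIR YRI (YR + YRR))"
  shows "invertible_mat ZtTT
    \<and> invertible_mat (YI + YII - YIR * minv (YR + YRR) * YRI)
    \<and> ZtRT * minv ZtTT =
        minv (YR + YRR) *
          (- YRT + YRI * minv (YI + YII - YIR * minv (YR + YRR) * YRI)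
                       * (YIT - YIR * minv (YR + YRR) * YRT))"
proof -
  define Y0 where "Y0 = diag_block_mat [YT, YI, YR]"
  have YTc: "YT \<in> carrier_mat NT NT" and YIc: "YI \<in> carrier_mat NI NI"
    and YRc: "YR \<in> carrier_mat NR NR" and Yc: "Y \<in> carrier_mat N N"
    unfolding YT_def YI_def YR_def Y_def using minv_carrier_mat assms by blast+
  have Z0c: "Z0 \<in> carrier_mat N N"
    unfolding Z0_def N_def using diag_block_mat3_carrier ZT ZI ZR by blast
  have "invertible_mat Z0" and "minv Z0 = Y0"
    using minv_diag_block_mat[of "[ZT, ZI, ZR]"] ZTinv ZIinv ZRinv
    unfolding Z0_def Y0_def YT_def YI_def YR_def by auto
  then have Minv: "invertible_mat (Y0 + Y)" and Zt: "Zt = minv (Y0 + Y) * Y0"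
    using minv_one_plus_mult[OF Z0c _ Yc] Ainv unfolding Zt_def Y_def by auto
  have Mc: "Y0 + Y \<in> carrier_mat (NT + NI + NR) (NT + NI + NR)"
    unfolding Y0_def using diag_block_mat3_carrier[OF YTc YIc YRc] Yc N_def by auto
  note M_blocks = blk_diag_block_mat3_add[OF YTc YIc YRc Yc[unfolded N_def], folded Y0_def
      YIT_def YII_def YIR_def YRT_def YRI_def YRR_def]
  have Schur: "invertible_mat (YI + YII - YIR * minv (YR + YRR) * YRI)"
    using invertible_schur_complement[where n = NI and m = NR, OF _ _ _ _ Binv Cinv] YIc YRc
    unfolding YII_def YIR_def YRI_def YRR_def by auto
  have "minv (Y0 + Y) \<in> carrier_mat N N" using minv_carrier_mat[OF Mc Minv] N_def by simp
  then show ?thesis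
    using blk_minv_column_ratio[OF Mc Minv, unfolded M_blocks, OF Binv Schur]
      blk_ratio_mult_diag_block_mat3[of "minv (Y0 + Y)" N NT NI NR, OF _ _ _ YTc _ YIc YRc]
      invertible_mat_minv[OF ZT ZTinv] Schur N_def
    unfolding ZtTT_def ZtRT_def Zt Y0_def YT_def by auto
qed

end
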